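(* Let $N\ge4$ and consider the cycle-graph ensemble ($z=2$) of spring networks on the circle described in the context. Then for every spring $i$ and every $\bar\ell\in(-1/2,1/2)$, $$\operatorname{Var}(\Delta l_i\mid\bar l_i=\bar\ell)=\frac{N-1}{N^2}\operatorname{Var}(\bar l)=\frac{N-1}{12N^2},$$ which is independent of $\bar\ell$; consequently the edge-averaged conditional variance $\operatorname{Var}(\Delta l\mid\bar l=\bar\ell)$ equals this constant and coincides with its expectation over $\bar\ell$.
   Context: Let the circle be $\mathbb R/\mathbb Z$. Node positions $x_1,\dots,x_N$ are i.i.d. uniform on $\mathbb R/\mathbb Z$, and for $k=1,\dots,N$ node $k$ is joined to node $k+1$ (indices mod $N$) by a spring; there are no other springs ($N$ springs, average degree $z=2$). A spring joining nodes $a<b$ is oriented from $a$ to $b$ and has initial signed length $\bar l_i\in[-1/2,1/2)$, the representative of $x_b-x_a$ mod $1$ in $[-1/2,1/2)$; each is uniform on $[-1/2,1/2)$, with variance $\operatorname{Var}(\bar l)=1/12$. The graph has a single cycle; its signed cycle matrix is a row vector $\mathbf C\in\{\pm1\}^{1\times N}$ (entry $+1$/$-1$ according as the spring's orientation agrees/disagrees with the cycle orientation), and the winding number is $g=\mathbf C\bar{\boldsymbol l}\in\mathbb Z$. The relaxed lengths are $\boldsymbol l^*=\mathbf C^T(\mathbf C\mathbf C^T)^{-1}\mathbf C\bar{\boldsymbol l}$ (minimizer of $\tfrac12\boldsymbol l^T\boldsymbol l$ subject to $\mathbf C\boldsymbol l=\mathbf C\bar{\boldsymbol l}$), and $\Delta\boldsymbol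 l=\boldsymbol l^*-\bar{\boldsymbol l}$. The edge-averaged conditional variance is $\operatorname{Var}(\Delta l\mid\bar l=\bar\ell):=\operatorname{Var}(\Delta l_I\mid \bar l_I=\bar\ell)$ with $I$ uniform on the springs and independent of everything else. *)

theory Defs
  imports "HOL-Probability.Probability"
begin

text \<open>Circle R/Z represented by [0,1). Nodes and springs are indexed 0..N-1
 (node k of the paper is node k-1 here). Spring k joins node k and node (k+1) mod N.\<close>

definition node_pos :: "nat \<Rightarrow> (nat \<Rightarrow> real) measure" where
  "node_pos N = PiM {..<N} (\<lambda>_. uniform_measure lborel {0..<1})"

definition rep_half :: "real \<Rightarrow> real" where
  "rep_half t = t - real_of_int \<lfloor>t + 1/2\<rfloor>"

definition spr_a :: "nat \<Rightarrow> nat \<Rightarrow> nat" where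
  "spr_a N k = min k (Suc k mod N)"

definition spr_b :: "nat \<Rightarrow> nat \<Rightarrow> nat" where
  "spr_b N k = max k (Suc k mod N)"

text \<open>initial signed length of spring k (oriented from a to b, a < b)\<close>
definition lbar :: "nat \<Rightarrow> nat \<Rightarrow> (nat \<Rightarrow> real) \<Rightarrow> real" where
  "lbar N k x = rep_half (x (spr_b N k) - x (spr_a N k))"

text \<open>signed cycle matrix (a row vector); the cycle is traversed 0 -> 1 -> ... -> N-1 -> 0,
 so spring k is traversed from node k to node (k+1) mod N\<close>
definition cyc :: "nat \<Rightarrow> nat \<Rightarrow> real" where
  "cyc N k = (if spr_a N k = k then 1 else -1)"

definition winding :: "nat \<Rightarrow> (nat \<Rightarrow> real) \<Rightarrow> real" where
  "winding N x = (\<Sum>j<N. cyc N j * lbar N j x)"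

text \<open>relaxed lengths l* = C^T (C C^T)^{-1} C lbar  (C C^T is 1x1)\<close>
definition lstar :: "nat \<Rightarrow> nat \<Rightarrow> (nat \<Rightarrow> real) \<Rightarrow> real" where
  "lstar N k x = cyc N k * (1 / (\<Sum>j<N. cyc N j * cyc N j)) * winding N x"

definition dl :: "nat \<Rightarrow> nat \<Rightarrow> (nat \<Rightarrow> real) \<Rightarrow> real" where
  "dl N k x = lstar N k x - lbar N k x"

definition cond_var :: "'a measure \<Rightarrow> 'a measure \<Rightarrow> ('a \<Rightarrow> real) \<Rightarrow> 'a \<Rightarrow> real" where
  "cond_var M F X = real_cond_exp M F (\<lambda>w. (X w - real_cond_exp M F X w)\<^sup>2)"

text \<open>probability space extended by an independent uniformly chosen spring I\<close>
definition edge_space :: "nat \<Rightarrow> ((nat \<Rightarrow> real) \<times> nat) measure" where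
  "edge_space N = node_pos N \<Otimes>\<^sub>M uniform_count_measure {..<N}"

end

theory Submission
  imports Defs
begin

text \<open>Write the relaxation of spring \<open>i\<close> as
  \<open>\<Delta>l i = c i / N * (\<Sum>j\<noteq>i. c j * l j) + (1/N - 1) * l i\<close>, where \<open>c\<close> is the signed cycle
  vector and \<open>l\<close> are the initial lengths.
  The springs of a proper sub-arc of the cycle have independent lengths, uniform on \<open>[-1/2, 1/2)\<close>:
  some node of the arc meets only one of its springs, and integrating out the position of that node
  leaves the length of that spring uniform whatever the others are.  For \<open>N \<ge> 4\<close> every moment
  \<open>E[1\<^sub>B(l i) * l j * l k]\<close> involves at most three springs, hence factorises; so, given \<open>l i\<close>,
  the sum \<open>\<Sum>j\<noteq>i. c j * l j\<close> has conditional mean \<open>0\<close> and conditional second moment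
  \<open>(N - 1)/12\<close>, which is all the conditional variance of \<open>\<Delta>l i\<close> depends on.  Averaging over a
  uniformly chosen spring preserves both identities.\<close>

section \<open>Conditional variance given a real random variable\<close>

lemma set_integral_vimage_algebra:
  fixes A :: "'a \<Rightarrow> real"
  assumes "S \<in> sets (vimage_algebra (space M) A borel)"
  obtains B where "B \<in> sets borel"
    and "\<And>g :: 'a \<Rightarrow> real. (\<integral>x\<in>S. g x \<partial>M) = (\<integral>x. indicator B (A x) * g x \<partial>M)"
proof -
  obtain B where B: "B \<in> sets borel" "S = A -` B \<inter> space M"
    using assms by (auto simp: sets_vimage_algebra2)
  then have "(\<integral>x\<in>S. g x \<partial>M) = (\<integral>x. indicator B (A x) * g x \<partial>M)" for g :: "'a \<Rightarrow> real"
    unfolding set_lebesgue_integral_def by (intro Bochner_Integration.integral_cong) (auto simp: indicator_def)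
  with B(1) show ?thesis by (rule that)
qed

lemma AE_cond_var_eq_const:
  fixes A X :: "'a \<Rightarrow> real" and m :: "real \<Rightarrow> real"
  assumes "prob_space M"
    and [measurable]: "A \<in> borel_measurable M" "X \<in> borel_measurable M" "m \<in> borel_measurable borel"
    and bounded: "\<And>x. x \<in> space M \<Longrightarrow> \<bar>X x\<bar> \<le> C" "\<And>x. x \<in> space M \<Longrightarrow> \<bar>m (A x)\<bar> \<le> C"
    and mean: "\<And>B. B \<in> sets borel \<Longrightarrow>
      (\<integral>x. indicator B (A x) * X x \<partial>M) = (\<integral>x. indicator B (A x) * m (A x) \<partial>M)"
    and variance: "\<And>B. B \<in> sets borel \<Longrightarrow>
      (\<integral>x. indicator B (A x) * (X x - m (A x))\<^sup>2 \<partial>M) = v * (\<integral>x. indicator B (A x) \<partial>M)"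
  shows "AE x in M. cond_var M (vimage_algebra (space M) A borel) X x = v"
proof -
  interpret prob_space M by fact
  define F where "F = vimage_algebra (space M) A borel"
  have "subalgebra M F"
    unfolding subalgebra_def F_def using sets_image_in_sets[of M "space M" A borel] by auto
  then interpret finite_measure_subalgebra M F by unfold_locales
  have [measurable]: "(\<lambda>x. m (A x)) \<in> borel_measurable F"
    using measurable_vimage_algebra1[of A "space M" borel] unfolding F_def by measurable
  have "\<bar>(X x - m (A x))\<^sup>2\<bar> \<le> (2 * C)\<^sup>2" if "x \<in> space M" for x
  proof -
    have "\<bar>X x - m (A x)\<bar> \<le> \<bar>2 * C\<bar>" using bounded[OF that] by linarith
    then show ?thesis by (simp add: abs_le_square_iff)
  qed
  then have integrable: "integrable M X" "integrable M (\<lambda>x. m (A x))" "integrable M (\<lambda>x. (X x - m (A x))\<^sup>2)"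
    using bounded by (auto intro!: integrable_const_bound[where B="max C ((2 * C)\<^sup>2)"] simp: le_max_iff_disj)
  have "AE x in M. real_cond_exp M F X x = m (A x)"
  proof (rule real_cond_exp_charact[OF _ integrable(1,2)])
    fix S assume "S \<in> sets F"
    then obtain B where "B \<in> sets borel" and "\<And>g :: _ \<Rightarrow> real. (\<integral>x\<in>S. g x \<partial>M) = (\<integral>x. indicator B (A x) * g x \<partial>M)"
      unfolding F_def by (rule set_integral_vimage_algebra) blast
    then show "(\<integral>x\<in>S. X x \<partial>M) = (\<integral>x\<in>S. m (A x) \<partial>M)" by (simp add: mean)
  qed simp
  then have "AE x in M. cond_var M F X x = real_cond_exp M F (\<lambda>x. (X x - m (A x))\<^sup>2) x"
    unfolding cond_var_def by (intro real_cond_exp_cong) (auto elim!: eventually_mono)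
  moreover have "AE x in M. real_cond_exp M F (\<lambda>x. (X x - m (A x))\<^sup>2) x = v"
  proof (rule real_cond_exp_charact[OF _ integrable(3)])
    fix S assume "S \<in> sets F"
    then obtain B where "B \<in> sets borel" and "\<And>g :: _ \<Rightarrow> real. (\<integral>x\<in>S. g x \<partial>M) = (\<integral>x. indicator B (A x) * g x \<partial>M)"
      unfolding F_def by (rule set_integral_vimage_algebra) blast
    then show "(\<integral>x\<in>S. (X x - m (A x))\<^sup>2 \<partial>M) = (\<integral>x\<in>S. v \<partial>M)" by (simp add: variance)
  qed simp_all
  ultimately show ?thesis unfolding F_def by eventually_elim simp
qed

section \<open>Uniform lengths on the circle\<close>

lemma rep_half_ge: "-1/2 \<le> rep_half t"
  unfolding rep_half_def using of_int_floor_le[of "t + 1/2"] by linarith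

lemma rep_half_less: "rep_half t < 1/2"
  unfolding rep_half_def using real_of_int_floor_add_one_gt[of "t + 1/2"] by linarith

lemma rep_half_eq_self: "-1/2 \<le> t \<Longrightarrow> t < 1/2 \<Longrightarrow> rep_half t = t"
  unfolding rep_half_def by (simp add: floor_eq_iff)

lemma rep_half_add_of_int: "rep_half (t + of_int n) = rep_half t"
proof -
  have "\<lfloor>t + of_int n + 1/2\<rfloor> = \<lfloor>t + 1/2\<rfloor> + n"
    using floor_add_int[of "t + 1/2" n] by (simp add: algebra_simps)
  then show ?thesis unfolding rep_half_def by simp
qed

lemma borel_measurable_rep_half[measurable]: "rep_half \<in> borel_measurable borel"
  unfolding rep_half_def by measurable

definition period_integral :: "(real \<Rightarrow> real) \<Rightarrow> real" where
  "period_integral f = (\<integral>t. indicator {-1/2..<1/2} t * f t \<partial>lborel)"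

lemma integrable_indicator_times_bounded:
  fixes g :: "real \<Rightarrow> real"
  assumes [measurable]: "g \<in> borel_measurable borel" and "\<And>t. \<bar>g t\<bar> \<le> C"
  shows "integrable lborel (\<lambda>t. indicator {p..<q} t * g t)"
proof (rule Bochner_Integration.integrable_bound)
  show "integrable lborel (\<lambda>t. \<bar>C\<bar> * indicator {p..<q} t :: real)"
    by (intro integrable_mult_right integrable_real_indicator emeasure_bounded_finite) auto
  show "AE t in lborel. norm (indicator {p..<q} t * g t) \<le> norm (\<bar>C\<bar> * indicator {p..<q} t :: real)"
    using assms(2) by (auto simp: indicator_def abs_mult intro: order.trans[OF _ abs_ge_self])
qed simp

lemma integral_indicator_shift_periodic:
  fixes k :: "real \<Rightarrow> real"
  assumes "\<And>t. k (t + of_int n) = k t"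
  shows "(\<integral>t. indicator {p..<q} t * k t \<partial>lborel)
       = (\<integral>t. indicator {p - of_int n..<q - of_int n} t * k t \<partial>lborel)"
proof -
  have "(\<integral>t. indicator {p..<q} t * k t \<partial>lborel)
      = (\<integral>t. indicator {p..<q} (of_int n + 1 * t) * k (of_int n + 1 * t) \<partial>lborel)"
    using lborel_integral_real_affine[where c=1 and t="of_int n" and f="\<lambda>t. indicator {p..<q} t * k t"]
    by simp
  also have "\<dots> = (\<integral>t. indicator {p - of_int n..<q - of_int n} t * k t \<partial>lborel)"
    using assms by (intro Bochner_Integration.integral_cong) (auto simp: indicator_def add.commute)
  finally show ?thesis .
qed

lemma integral_unit_interval_periodic:
  fixes k :: "real \<Rightarrow> real"
  assumes [measurable]: "k \<in> borel_measurable borel" and bounded: "\<And>t. \<bar>k t\<bar> \<le> C"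
    and periodic: "\<And>t n. k (t + of_int n) = k t"
  shows "(\<integral>t. indicator {a..<a+1} t * k t \<partial>lborel) = (\<integral>t. indicator {-1/2..<1/2} t * k t \<partial>lborel)"
proof -
  define n where "n = \<lfloor>a + 1/2\<rfloor>"
  have n: "of_int n \<le> a + 1/2" "a + 1/2 < of_int n + 1"
    unfolding n_def by (rule of_int_floor_le, rule real_of_int_floor_add_one_gt)
  have int: "\<And>p q. integrable lborel (\<lambda>t. indicator {p..<q} t * k t)"
    by (rule integrable_indicator_times_bounded[OF _ bounded]) simp
  have shift: "\<And>n p q. (\<integral>t. indicator {p..<q} t * k t \<partial>lborel)
      = (\<integral>t. indicator {p - of_int n..<q - of_int n} t * k t \<partial>lborel)"
    by (rule integral_indicator_shift_periodic) (rule periodic)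
  \<comment> \<open>split at the half-integer \<open>n + 1/2\<close> and shift the two pieces back by \<open>n\<close> and \<open>n + 1\<close>\<close>
  have "(\<integral>t. indicator {a..<a+1} t * k t \<partial>lborel)
      = (\<integral>t. indicator {a..<of_int n + 1/2} t * k t + indicator {of_int n + 1/2..<a+1} t * k t \<partial>lborel)"
    using n by (intro Bochner_Integration.integral_cong) (auto simp: indicator_def)
  also have "\<dots> = (\<integral>t. indicator {a..<of_int n + 1/2} t * k t \<partial>lborel)
      + (\<integral>t. indicator {of_int n + 1/2..<a+1} t * k t \<partial>lborel)"
    by (rule Bochner_Integration.integral_add[OF int int])
  also have "\<dots> = (\<integral>t. indicator {a - of_int n..<1/2} t * k t \<partial>lborel)
      + (\<integral>t. indicator {-1/2..<a - of_int n} t * k t \<partial>lborel)"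
    using shift[where n=n and p=a and q="of_int n + 1/2"] shift[where n="n + 1" and p="of_int n + 1/2" and q="a + 1"] by simp
  also have "\<dots> = (\<integral>t. indicator {a - of_int n..<1/2} t * k t
      + indicator {-1/2..<a - of_int n} t * k t \<partial>lborel)"
    by (rule Bochner_Integration.integral_add[OF int int, symmetric])
  also have "\<dots> = (\<integral>t. indicator {-1/2..<1/2} t * k t \<partial>lborel)"
    using n by (intro Bochner_Integration.integral_cong) (auto simp: indicator_def)
  finally show ?thesis .
qed

lemma integral_uniform_measure_unit_interval:
  fixes g :: "real \<Rightarrow> real"
  assumes [measurable]: "g \<in> borel_measurable borel"
  shows "(\<integral>u. g u \<partial>uniform_measure lborel {0..<1}) = (\<integral>u. indicator {0..<1} u * g u \<partial>lborel)"
proof -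
  have "uniform_measure lborel {0..<1::real} = density lborel (\<lambda>u. ennreal (indicator {0..<1} u))"
    unfolding uniform_measure_def by (simp add: ennreal_indicator divide_ennreal_def)
  then show ?thesis by (simp only:) (subst integral_density; simp)
qed

lemma integral_unit_interval_rep_half:
  fixes f :: "real \<Rightarrow> real"
  assumes "f \<in> borel_measurable borel" and bounded: "\<And>t. -1/2 \<le> t \<Longrightarrow> t < 1/2 \<Longrightarrow> \<bar>f t\<bar> \<le> C"
  shows "(\<integral>t. indicator {a..<a+1} t * f (rep_half t) \<partial>lborel) = period_integral f"
proof -
  have "(\<integral>t. indicator {a..<a+1} t * f (rep_half t) \<partial>lborel)
      = (\<integral>t. indicator {-1/2..<1/2} t * f (rep_half t) \<partial>lborel)"
    by (rule integral_unit_interval_periodic[where C=C])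
      (use assms rep_half_ge rep_half_less in \<open>simp_all add: rep_half_add_of_int\<close>)
  also have "\<dots> = period_integral f"
    unfolding period_integral_def
    by (intro Bochner_Integration.integral_cong) (auto simp: indicator_def rep_half_eq_self)
  finally show ?thesis .
qed

lemma integral_uniform_rep_half:
  fixes f :: "real \<Rightarrow> real"
  assumes [measurable]: "f \<in> borel_measurable borel"
    and bounded: "\<And>t. -1/2 \<le> t \<Longrightarrow> t < 1/2 \<Longrightarrow> \<bar>f t\<bar> \<le> C"
  shows "(\<integral>u. f (rep_half (u - c)) \<partial>uniform_measure lborel {0..<1}) = period_integral f"
    and "(\<integral>u. f (rep_half (c - u)) \<partial>uniform_measure lborel {0..<1}) = period_integral f"
proof -
  have "(\<integral>u. f (rep_half (u - c)) \<partial>uniform_measure lborel {0..<1})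
      = (\<integral>u. indicator {0..<1} (c + 1 * u) * f (rep_half (c + 1 * u - c)) \<partial>lborel)"
    using lborel_integral_real_affine[where c=1 and t=c and f="\<lambda>u. indicator {0..<1} u * f (rep_half (u - c))"]
    by (simp add: integral_uniform_measure_unit_interval)
  also have "\<dots> = (\<integral>t. indicator {-c..<-c+1} t * f (rep_half t) \<partial>lborel)"
    by (intro Bochner_Integration.integral_cong) (auto simp: indicator_def)
  finally show "(\<integral>u. f (rep_half (u - c)) \<partial>uniform_measure lborel {0..<1}) = period_integral f"
    using integral_unit_interval_rep_half[of f C "-c", OF assms] by simp
  have "(\<integral>u. f (rep_half (c - u)) \<partial>uniform_measure lborel {0..<1})
      = (\<integral>u. indicator {0..<1} (c + -1 * u) * f (rep_half (c - (c + -1 * u))) \<partial>lborel)"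
    using lborel_integral_real_affine[where c="-1" and t=c and f="\<lambda>u. indicator {0..<1} u * f (rep_half (c - u))"]
    by (simp add: integral_uniform_measure_unit_interval)
  also have "\<dots> = (\<integral>t. indicator {c-1..<c-1+1} t * f (rep_half t) \<partial>lborel)"
  proof (rule integral_cong_AE)
    show "AE u in lborel. indicator {0..<1} (c + -1 * u) * f (rep_half (c - (c + -1 * u)))
        = indicator {c-1..<c-1+1} u * f (rep_half u)"
      using AE_lborel_singleton[of c] AE_lborel_singleton[of "c-1"]
      by eventually_elim (auto simp: indicator_def)
  qed simp_all
  finally show "(\<integral>u. f (rep_half (c - u)) \<partial>uniform_measure lborel {0..<1}) = period_integral f"
    using integral_unit_interval_rep_half[of f C "c - 1", OF assms] by simp
qed

lemma period_integral_power: "period_integral (\<lambda>t. t ^ n) = ((1/2) ^ Suc n - (-1/2) ^ Suc n) / Suc n"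
proof -
  have "period_integral (\<lambda>t. t ^ n) = (\<integral>t. t ^ n * indicator {-1/2..1/2} t \<partial>lborel)"
    unfolding period_integral_def using AE_lborel_singleton[of "1/2"]
    by (intro integral_cong_AE) (auto elim!: eventually_mono simp: indicator_def)
  also have "\<dots> = ((1/2) ^ Suc n - (-1/2) ^ Suc n) / Suc n"
    by (rule integral_power) simp
  finally show ?thesis .
qed

lemma period_integral_id: "period_integral (\<lambda>t. t) = 0"
  using period_integral_power[of 1] by simp

lemma period_integral_square: "period_integral (\<lambda>t. t\<^sup>2) = 1/12"
  using period_integral_power[of 2] by (simp add: numeral_eq_Suc)

section \<open>Independence of the springs of a proper arc\<close>

interpretation node_pos: prob_space "node_pos N" for N
  unfolding node_pos_def by (intro prob_space_PiM prob_space_uniform_measure) auto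

lemma spr_endpoints: "spr_a N k \<in> {k, Suc k mod N}" "spr_b N k \<in> {k, Suc k mod N}"
  unfolding spr_a_def spr_b_def by (auto simp: min_def max_def)

lemma spr_less: "k < N \<Longrightarrow> spr_a N k < N" "k < N \<Longrightarrow> spr_b N k < N"
  unfolding spr_a_def spr_b_def by (auto simp: min_def max_def)

lemma borel_measurable_lbar[measurable]:
  assumes "k < N"
  shows "lbar N k \<in> borel_measurable (node_pos N)"
proof -
  have [measurable]: "(\<lambda>x. x j) \<in> borel_measurable (node_pos N)" if "j < N" for j
    unfolding node_pos_def using that by (intro measurable_PiM_component_rev) auto
  show ?thesis unfolding lbar_def using spr_less[OF assms] by measurable
qed

lemma lbar_bounds: "-1/2 \<le> lbar N k x" "lbar N k x < 1/2"
  unfolding lbar_def by (rule rep_half_ge, rule rep_half_less)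

lemma abs_lbar_le: "\<bar>lbar N k x\<bar> \<le> 1/2"
  using lbar_bounds[of N k x] by linarith

lemma Suc_mod_eq_Suc_mod_iff: "k < N \<Longrightarrow> e < N \<Longrightarrow> Suc k mod N = Suc e mod N \<longleftrightarrow> k = e"
  by (metis Suc_inject Suc_lessI mod_Suc mod_less mod_self nat.distinct(1))

lemma lbar_fun_upd_other:
  "m \<noteq> k \<Longrightarrow> m \<noteq> Suc k mod N \<Longrightarrow> lbar N k (x(m := y)) = lbar N k x"
  using spr_endpoints[of N k] unfolding lbar_def by auto

lemma integral_lbar_fun_upd_head:
  fixes f :: "real \<Rightarrow> real"
  assumes "e < N" "2 \<le> N" "f \<in> borel_measurable borel"
    and "\<And>t. -1/2 \<le> t \<Longrightarrow> t < 1/2 \<Longrightarrow> \<bar>f t\<bar> \<le> C"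
  shows "(\<integral>y. f (lbar N e (x(Suc e mod N := y))) \<partial>uniform_measure lborel {0..<1}) = period_integral f"
proof (cases "Suc e < N")
  case True
  then have "lbar N e (x(Suc e mod N := y)) = rep_half (y - x e)" for y
    unfolding lbar_def spr_a_def spr_b_def by simp
  then show ?thesis using integral_uniform_rep_half(1)[OF assms(3,4)] by simp
next
  case False
  \<comment> \<open>the closing spring \<open>N - 1\<close> is oriented against the cycle, from node \<open>0\<close> to node \<open>N - 1\<close>\<close>
  with assms(1,2) have "Suc e = N" "e \<noteq> 0" by auto
  then have "lbar N e (x(Suc e mod N := y)) = rep_half (x e - y)" for y
    unfolding lbar_def spr_a_def spr_b_def by simp
  then show ?thesis using integral_uniform_rep_half(2)[OF assms(3,4)] by simp
qed

lemma ex_spring_head_notin: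
  assumes "S \<subseteq> {..<N}" "S \<noteq> {}" "card S < N"
  shows "\<exists>e\<in>S. Suc e mod N \<notin> S"
proof (rule ccontr)
  assume "\<not> ?thesis"
  then have closed: "\<And>e. e \<in> S \<Longrightarrow> Suc e mod N \<in> S" by auto
  obtain e where e: "e \<in> S" using assms(2) by auto
  have orbit: "(e + j) mod N \<in> S" for j
  proof (induction j)
    case 0
    then show ?case using e assms(1) by auto
  next
    case (Suc j)
    then show ?case using closed[OF Suc] by (simp add: mod_Suc_eq)
  qed
  have "{..<N} \<subseteq> S"
  proof
    fix i assume "i \<in> {..<N}"
    moreover have "e < N" using e assms(1) by auto
    ultimately show "i \<in> S" using orbit[of "N - e + i"] by simp
  qed
  then have "card {..<N} \<le> card S"
    using assms(1) by (intro card_mono) (auto intro: finite_subset)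
  with assms(3) show False by simp
qed

lemma integral_node_pos_fun_upd:
  fixes F :: "(nat \<Rightarrow> real) \<Rightarrow> real"
  assumes "m < N" "integrable (node_pos N) F"
  shows "(\<integral>x. F x \<partial>node_pos N)
    = (\<integral>x. (\<integral>y. F (x(m := y)) \<partial>uniform_measure lborel {0..<1}) \<partial>PiM ({..<N} - {m}) (\<lambda>_. uniform_measure lborel {0..<1}))"
proof -
  interpret product_sigma_finite "\<lambda>_::nat. uniform_measure lborel {0..<1::real}"
    unfolding product_sigma_finite_def
    by (auto intro!: prob_space_imp_sigma_finite prob_space_uniform_measure)
  have "insert m ({..<N} - {m}) = {..<N}" using assms(1) by auto
  then show ?thesis
    using product_integral_insert[of "{..<N} - {m}" m F] assms(2) unfolding node_pos_def by simp
qed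

lemma integrable_node_pos_bounded:
  fixes F :: "(nat \<Rightarrow> real) \<Rightarrow> real"
  shows "F \<in> borel_measurable (node_pos N) \<Longrightarrow> (\<And>x. \<bar>F x\<bar> \<le> C) \<Longrightarrow> integrable (node_pos N) F"
  by (rule node_pos.integrable_const_bound[where B=C]) auto

lemma integrable_prod_lbar:
  fixes f :: "nat \<Rightarrow> real \<Rightarrow> real"
  assumes "S \<subseteq> {..<N}" "\<And>k. k \<in> S \<Longrightarrow> f k \<in> borel_measurable borel"
    and bounded: "\<And>k t. k \<in> S \<Longrightarrow> -1/2 \<le> t \<Longrightarrow> t < 1/2 \<Longrightarrow> \<bar>f k t\<bar> \<le> C"
  shows "integrable (node_pos N) (\<lambda>x. \<Prod>k\<in>S. f k (lbar N k x))"
proof (rule integrable_node_pos_bounded[where C="\<bar>C\<bar> ^ card S"])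
  show "(\<lambda>x. \<Prod>k\<in>S. f k (lbar N k x)) \<in> borel_measurable (node_pos N)"
    using assms(1,2) by (intro borel_measurable_prod) (auto intro!: measurable_compose[OF borel_measurable_lbar])
  fix x
  have "\<bar>\<Prod>k\<in>S. f k (lbar N k x)\<bar> = (\<Prod>k\<in>S. \<bar>f k (lbar N k x)\<bar>)" by (simp add: abs_prod)
  also have "\<dots> \<le> (\<Prod>k\<in>S. \<bar>C\<bar>)"
  proof (rule prod_mono)
    fix k assume "k \<in> S"
    then have "\<bar>f k (lbar N k x)\<bar> \<le> C" using bounded lbar_bounds by blast
    then show "0 \<le> \<bar>f k (lbar N k x)\<bar> \<and> \<bar>f k (lbar N k x)\<bar> \<le> \<bar>C\<bar>" by simp
  qed
  finally show "\<bar>\<Prod>k\<in>S. f k (lbar N k x)\<bar> \<le> \<bar>C\<bar> ^ card S" by simp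
qed

lemma integral_prod_lbar:
  assumes "S \<subseteq> {..<N}" "card S < N"
    and measurable: "\<And>k. k \<in> S \<Longrightarrow> f k \<in> borel_measurable borel"
    and bounded: "\<And>k t. k \<in> S \<Longrightarrow> -1/2 \<le> t \<Longrightarrow> t < 1/2 \<Longrightarrow> \<bar>f k t\<bar> \<le> C"
  shows "(\<integral>x. (\<Prod>k\<in>S. f k (lbar N k x)) \<partial>node_pos N) = (\<Prod>k\<in>S. period_integral (f k))"
  using assms(1,2) measurable bounded
proof (induction "card S" arbitrary: S)
  case 0
  then have "S = {}" using finite_subset[of S "{..<N}"] by auto
  then show ?case by (simp add: node_pos.prob_space)
next
  case (Suc n)
  let ?U = "uniform_measure lborel {0..<1::real}"
  let ?P = "\<lambda>S x. \<Prod>k\<in>S. f k (lbar N k x)"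
  have fin: "finite S" using Suc.prems(1) finite_subset by blast
  have "S \<noteq> {}" using Suc.hyps(2) by auto
  then obtain e where e: "e \<in> S" and head: "Suc e mod N \<notin> S"
    using ex_spring_head_notin[OF Suc.prems(1) _ Suc.prems(2)] by auto
  define m where "m = Suc e mod N"
  have "e < N" "2 \<le> N" using e Suc.prems(1,2) Suc.hyps(2) by auto
  have "m < N" unfolding m_def using \<open>e < N\<close> by simp
  have integrable: "integrable (node_pos N) (?P T)" if "T \<subseteq> S" for T
    using that Suc.prems by (intro integrable_prod_lbar[where C=C]) auto
  \<comment> \<open>node \<open>m\<close> is an endpoint of spring \<open>e\<close> only, so integrating it out leaves the other factors unchanged\<close>
  have fixed: "?P (S - {e}) (x(m := y)) = ?P (S - {e}) x" for x y
  proof (rule prod.cong[OF refl])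
    fix k assume "k \<in> S - {e}"
    then have "m \<noteq> k" "m \<noteq> Suc k mod N"
      using head Suc.prems(1) \<open>e < N\<close> unfolding m_def by (auto simp: Suc_mod_eq_Suc_mod_iff)
    then show "f k (lbar N k (x(m := y))) = f k (lbar N k x)" by (simp add: lbar_fun_upd_other)
  qed
  have head_integral: "(\<integral>y. f e (lbar N e (x(m := y))) \<partial>?U) = period_integral (f e)" for x
    unfolding m_def using Suc.prems(3,4) e \<open>e < N\<close> \<open>2 \<le> N\<close> by (intro integral_lbar_fun_upd_head) auto
  have "(\<integral>x. ?P S x \<partial>node_pos N) = (\<integral>x. (\<integral>y. ?P S (x(m := y)) \<partial>?U) \<partial>PiM ({..<N} - {m}) (\<lambda>_. ?U))"
    by (rule integral_node_pos_fun_upd[OF \<open>m < N\<close> integrable]) simp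
  also have "\<dots> = (\<integral>x. period_integral (f e) * ?P (S - {e}) x \<partial>PiM ({..<N} - {m}) (\<lambda>_. ?U))"
    using fin e by (simp add: prod.remove fixed head_integral)
  also have "\<dots> = period_integral (f e) * (\<integral>x. (\<integral>y. ?P (S - {e}) (x(m := y)) \<partial>?U) \<partial>PiM ({..<N} - {m}) (\<lambda>_. ?U))"
    using prob_space.prob_space[OF prob_space_uniform_measure[of lborel "{0..<1::real}"]] by (simp add: fixed)
  also have "\<dots> = period_integral (f e) * (\<integral>x. ?P (S - {e}) x \<partial>node_pos N)"
    by (subst integral_node_pos_fun_upd[OF \<open>m < N\<close> integrable]) auto
  also have "\<dots> = (\<Prod>k\<in>S. period_integral (f k))"
  proof -
    have "(\<integral>x. ?P (S - {e}) x \<partial>node_pos N) = (\<Prod>k\<in>S - {e}. period_integral (f k))"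
      by (rule Suc.hyps(1)) (use Suc.hyps(2) Suc.prems fin e in auto)
    then show ?thesis using fin e by (simp add: prod.remove)
  qed
  finally show ?case .
qed

lemma integral_fun_lbar:
  assumes "k < N" "1 < N" "g \<in> borel_measurable borel"
    and "\<And>t. -1/2 \<le> t \<Longrightarrow> t < 1/2 \<Longrightarrow> \<bar>g t\<bar> \<le> C"
  shows "(\<integral>x. g (lbar N k x) \<partial>node_pos N) = period_integral g"
  using integral_prod_lbar[where S="{k}" and f="\<lambda>_. g" and C=C] assms by simp

lemma integral_indicator_lbar_times_prod:
  assumes "S \<subseteq> {..<N}" "card S < N" "i \<in> S" "B \<in> sets borel" "g \<in> borel_measurable borel"
    and "\<And>t. -1/2 \<le> t \<Longrightarrow> t < 1/2 \<Longrightarrow> \<bar>g t\<bar> \<le> C"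
  shows "(\<integral>x. indicator B (lbar N i x) * (\<Prod>k\<in>S - {i}. g (lbar N k x)) \<partial>node_pos N)
    = period_integral (indicator B) * period_integral g ^ (card S - 1)"
proof -
  define f where "f k = (if k = i then indicator B else g)" for k
  have "finite S" using assms(1) finite_subset by blast
  have bounded: "\<bar>f k t\<bar> \<le> max 1 C" if "-1/2 \<le> t" "t < 1/2" for k t
    using assms(6)[OF that] by (auto simp: f_def indicator_def le_max_iff_disj)
  have "(\<integral>x. (\<Prod>k\<in>S. f k (lbar N k x)) \<partial>node_pos N) = (\<Prod>k\<in>S. period_integral (f k))"
    by (rule integral_prod_lbar[where C="max 1 C"]) (use assms(1-5) bounded in \<open>auto simp: f_def\<close>)
  with \<open>finite S\<close> \<open>i \<in> S\<close> show ?thesis by (simp add: prod.remove f_def)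
qed

section \<open>Relaxation of a single spring\<close>

lemma cyc_times_cyc: "cyc N j * cyc N j = 1"
  unfolding cyc_def by simp

lemma dl_eq:
  assumes "i < N"
  shows "dl N i x = cyc N i / N * (\<Sum>j\<in>{..<N} - {i}. cyc N j * lbar N j x) + (1 / N - 1) * lbar N i x"
    (is "_ = cyc N i / N * ?G + _")
proof -
  have "winding N x = cyc N i * lbar N i x + ?G"
    unfolding winding_def using assms by (simp add: sum.remove)
  moreover have "(\<Sum>j<N. cyc N j * cyc N j) = real N"
    by (simp add: cyc_times_cyc)
  ultimately have "dl N i x = cyc N i * (1 / N) * (cyc N i * lbar N i x + ?G) - lbar N i x"
    unfolding dl_def lstar_def by simp
  also have "\<dots> = (cyc N i * cyc N i) * lbar N i x / N + cyc N i / N * ?G - lbar N i x"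
    by (simp add: algebra_simps)
  finally show ?thesis
    by (simp add: cyc_times_cyc algebra_simps)
qed

lemma abs_dl_le:
  assumes "0 < N"
  shows "\<bar>dl N i x\<bar> \<le> 1"
proof -
  have "\<bar>winding N x\<bar> \<le> (\<Sum>j<N. 1/2)"
    unfolding winding_def
  proof (rule order.trans[OF sum_abs sum_mono])
    fix j
    show "\<bar>cyc N j * lbar N j x\<bar> \<le> 1/2" using abs_lbar_le[of N j x] by (simp add: abs_mult cyc_def)
  qed
  then have "\<bar>lstar N i x\<bar> \<le> 1/2"
    using assms unfolding lstar_def cyc_times_cyc by (simp add: abs_mult cyc_def divide_le_eq)
  then show ?thesis unfolding dl_def using abs_lbar_le[of N i x] by linarith
qed

lemma abs_scaled_lbar_le:
  assumes "0 < N"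
  shows "\<bar>(1 / real N - 1) * lbar N i x\<bar> \<le> 1/2"
proof -
  have "\<bar>(1 / real N - 1) * lbar N i x\<bar> \<le> \<bar>lbar N i x\<bar>"
    using assms by (simp add: abs_mult mult_le_cancel_right2 abs_le_iff)
  then show ?thesis using abs_lbar_le[of N i x] by linarith
qed

lemma borel_measurable_dl[measurable]: "i < N \<Longrightarrow> dl N i \<in> borel_measurable (node_pos N)"
  unfolding dl_def lstar_def winding_def by measurable

context
  fixes N i :: nat and B :: "real set"
  assumes N: "4 \<le> N" and i: "i < N" and B[measurable]: "B \<in> sets borel"
begin

lemma integral_indicator_lbar_times_lbar:
  assumes "j < N" "j \<noteq> i"
  shows "(\<integral>x. indicator B (lbar N i x) * lbar N j x \<partial>node_pos N) = 0"
  using integral_indicator_lbar_times_prod[where S="{i, j}" and g="\<lambda>t. t" and C=1 and N=N and i=i and B=B] assms i N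
  by (simp add: period_integral_id)

lemma integral_indicator_lbar_times_lbar_lbar:
  assumes "j < N" "j \<noteq> i" "k < N" "k \<noteq> i"
  shows "(\<integral>x. indicator B (lbar N i x) * (lbar N j x * lbar N k x) \<partial>node_pos N)
    = (if j = k then period_integral (indicator B) / 12 else 0)"
proof (cases "j = k")
  case True
  have "\<bar>t\<^sup>2\<bar> \<le> 1" if "-1/2 \<le> t" "t < 1/2" for t :: real
    using that by (simp add: abs_square_le_1)
  with True show ?thesis
    using integral_indicator_lbar_times_prod[where S="{i, j}" and g="\<lambda>t. t\<^sup>2" and C=1 and N=N and i=i and B=B] assms i N
    by (simp add: period_integral_square[unfolded power2_eq_square] power2_eq_square)
next
  case False
  then show ?thesis
    using integral_indicator_lbar_times_prod[where S="{i, j, k}" and g="\<lambda>t. t" and C=1 and N=N and i=i and B=B] assms i N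
    by (simp add: period_integral_id card_insert_if)
qed

lemma integrable_indicator_lbar_times_lbar:
  assumes "j < N"
  shows "integrable (node_pos N) (\<lambda>x. indicator B (lbar N i x) * lbar N j x)"
proof (rule integrable_node_pos_bounded[where C=1])
  fix x
  show "\<bar>indicator B (lbar N i x) * lbar N j x\<bar> \<le> 1"
    using abs_lbar_le[of N j x] by (simp add: indicator_def)
qed (use assms i in measurable)

lemma integrable_indicator_lbar_times_lbar_lbar:
  assumes "j < N" "k < N"
  shows "integrable (node_pos N) (\<lambda>x. indicator B (lbar N i x) * (lbar N j x * lbar N k x))"
proof (rule integrable_node_pos_bounded[where C=1])
  fix x
  have "\<bar>lbar N j x * lbar N k x\<bar> \<le> 1"
    using abs_lbar_le[of N j x] abs_lbar_le[of N k x] by (simp add: abs_mult mult_le_one)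
  then show "\<bar>indicator B (lbar N i x) * (lbar N j x * lbar N k x)\<bar> \<le> 1"
    by (simp add: indicator_def)
qed (use assms i in measurable)

lemma integral_indicator_lbar_times_sum:
  assumes "J \<subseteq> {..<N} - {i}"
  shows "(\<integral>x. indicator B (lbar N i x) * (\<Sum>j\<in>J. c j * lbar N j x) \<partial>node_pos N) = 0"
proof -
  have "(\<integral>x. indicator B (lbar N i x) * (\<Sum>j\<in>J. c j * lbar N j x) \<partial>node_pos N)
      = (\<Sum>j\<in>J. c j * (\<integral>x. indicator B (lbar N i x) * lbar N j x \<partial>node_pos N))"
    using assms by (simp add: sum_distrib_left mult.left_commute integrable_indicator_lbar_times_lbar subset_eq)
  also have "\<dots> = 0"
    using assms by (simp add: integral_indicator_lbar_times_lbar subset_eq)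
  finally show ?thesis .
qed

lemma integral_indicator_lbar_times_square_sum:
  assumes "J \<subseteq> {..<N} - {i}"
  shows "(\<integral>x. indicator B (lbar N i x) * (\<Sum>j\<in>J. c j * lbar N j x)\<^sup>2 \<partial>node_pos N)
    = (\<Sum>j\<in>J. (c j)\<^sup>2) * period_integral (indicator B) / 12"
proof -
  have "finite J" using assms finite_subset by blast
  have square: "indicator B (lbar N i x) * (\<Sum>j\<in>J. c j * lbar N j x)\<^sup>2
      = (\<Sum>j\<in>J. \<Sum>k\<in>J. c j * c k * (indicator B (lbar N i x) * (lbar N j x * lbar N k x)))" for x
    by (simp add: power2_eq_square sum_product sum_distrib_left algebra_simps)
  have "(\<integral>x. indicator B (lbar N i x) * (\<Sum>j\<in>J. c j * lbar N j x)\<^sup>2 \<partial>node_pos N)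
      = (\<Sum>j\<in>J. \<Sum>k\<in>J. c j * c k * (\<integral>x. indicator B (lbar N i x) * (lbar N j x * lbar N k x) \<partial>node_pos N))"
    unfolding square using assms
    by (simp add: integrable_indicator_lbar_times_lbar_lbar subset_eq)
  also have "\<dots> = (\<Sum>j\<in>J. \<Sum>k\<in>J. if j = k then (c j)\<^sup>2 * period_integral (indicator B) / 12 else 0)"
    using assms by (intro sum.cong refl)
      (auto simp: integral_indicator_lbar_times_lbar_lbar subset_eq power2_eq_square)
  also have "\<dots> = (\<Sum>j\<in>J. (c j)\<^sup>2) * period_integral (indicator B) / 12"
    using \<open>finite J\<close> by (simp add: sum_divide_distrib sum_distrib_right)
  finally show ?thesis .
qed

lemma integral_indicator_lbar_times_dl:
  "(\<integral>x. indicator B (lbar N i x) * dl N i x \<partial>node_pos N)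
    = (\<integral>x. indicator B (lbar N i x) * ((1 / N - 1) * lbar N i x) \<partial>node_pos N)"
proof -
  let ?G = "\<lambda>x. indicator B (lbar N i x) * (\<Sum>j\<in>{..<N} - {i}. cyc N j * lbar N j x)"
  have "integrable (node_pos N) ?G"
    unfolding sum_distrib_left mult.left_commute[of "indicator B _"]
    by (intro Bochner_Integration.integrable_sum integrable_mult_right integrable_indicator_lbar_times_lbar) simp
  moreover have "integrable (node_pos N) (\<lambda>x. indicator B (lbar N i x) * lbar N i x)"
    by (rule integrable_indicator_lbar_times_lbar[OF i])
  moreover have "integral\<^sup>L (node_pos N) ?G = 0"
    by (rule integral_indicator_lbar_times_sum) simp
  moreover have "indicator B (lbar N i x) * dl N i x
      = cyc N i / N * ?G x + (1 / N - 1) * (indicator B (lbar N i x) * lbar N i x)" for x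
    unfolding dl_eq[OF i] by (simp add: algebra_simps)
  ultimately show ?thesis by (simp add: mult.left_commute)
qed

lemma integral_indicator_lbar_times_dl_residual:
  "(\<integral>x. indicator B (lbar N i x) * (dl N i x - (1 / N - 1) * lbar N i x)\<^sup>2 \<partial>node_pos N)
    = (real N - 1) / (real N)\<^sup>2 * (1/12) * (\<integral>x. indicator B (lbar N i x) \<partial>node_pos N)"
proof -
  let ?J = "{..<N} - {i}"
  have "(dl N i x - (1 / N - 1) * lbar N i x)\<^sup>2 = (\<Sum>j\<in>?J. cyc N j * lbar N j x)\<^sup>2 / (real N)\<^sup>2" for x
    unfolding dl_eq[OF i] by (simp add: power_divide power_mult_distrib cyc_def)
  then have "(\<integral>x. indicator B (lbar N i x) * (dl N i x - (1 / N - 1) * lbar N i x)\<^sup>2 \<partial>node_pos N)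
      = (\<integral>x. indicator B (lbar N i x) * (\<Sum>j\<in>?J. cyc N j * lbar N j x)\<^sup>2 \<partial>node_pos N) / (real N)\<^sup>2"
    by simp
  also have "\<dots> = (\<Sum>j\<in>?J. (cyc N j)\<^sup>2) * period_integral (indicator B) / 12 / (real N)\<^sup>2"
    by (subst integral_indicator_lbar_times_square_sum) simp_all
  also have "\<dots> = (real N - 1) / (real N)\<^sup>2 * (1/12) * (\<integral>x. indicator B (lbar N i x) \<partial>node_pos N)"
  proof -
    have "(\<Sum>j\<in>?J. (cyc N j)\<^sup>2) = real N - 1"
      using i by (simp add: power2_eq_square cyc_times_cyc of_nat_diff)
    moreover have "(\<integral>x. indicator B (lbar N i x) \<partial>node_pos N) = period_integral (indicator B)"
      using i N by (intro integral_fun_lbar[where C=1]) (auto simp: indicator_def)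
    ultimately show ?thesis by simp
  qed
  finally show ?thesis .
qed

end

lemma variance_lbar:
  assumes "1 < N" "i < N"
  shows "prob_space.variance (node_pos N) (lbar N i) = 1/12"
proof -
  have bounded: "\<bar>t\<bar> \<le> 1" "\<bar>t\<^sup>2\<bar> \<le> 1" if "-1/2 \<le> t" "t < 1/2" for t :: real
    using that by (auto simp: abs_square_le_1)
  have "(\<integral>x. lbar N i x \<partial>node_pos N) = 0"
    using integral_fun_lbar[OF assms(2,1), of "\<lambda>t. t" 1] bounded(1) by (simp add: period_integral_id)
  moreover have "(\<integral>x. (lbar N i x)\<^sup>2 \<partial>node_pos N) = 1/12"
    using integral_fun_lbar[OF assms(2,1), of "\<lambda>t. t\<^sup>2" 1] bounded(2) by (simp add: period_integral_square)
  ultimately show ?thesis by simp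
qed

lemma AE_cond_var_dl:
  assumes "4 \<le> N" "i < N"
  shows "AE x in node_pos N.
    cond_var (node_pos N) (vimage_algebra (space (node_pos N)) (lbar N i) borel) (dl N i) x
      = (real N - 1) / (real N)\<^sup>2 * (1/12)"
proof (rule AE_cond_var_eq_const[where m="\<lambda>t. (1 / N - 1) * t" and C=1])
  fix x
  show "\<bar>dl N i x\<bar> \<le> 1" using assms by (intro abs_dl_le) simp
  show "\<bar>(1 / N - 1) * lbar N i x\<bar> \<le> 1"
    using assms abs_scaled_lbar_le[of N i x] by simp
qed (use assms integral_indicator_lbar_times_dl integral_indicator_lbar_times_dl_residual in
     \<open>simp_all add: node_pos.prob_space_axioms\<close>)

section \<open>A uniformly chosen spring\<close>

lemma prob_space_edge_space: "0 < N \<Longrightarrow> prob_space (edge_space N)"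
  unfolding edge_space_def
  by (intro prob_space_pair node_pos.prob_space_axioms prob_space_uniform_count_measure) auto

lemma borel_measurable_edge_space_split:
  fixes f :: "nat \<Rightarrow> (nat \<Rightarrow> real) \<Rightarrow> real"
  assumes "\<And>I. I < N \<Longrightarrow> f I \<in> borel_measurable (node_pos N)"
  shows "(\<lambda>(x, I). f I x) \<in> borel_measurable (edge_space N)"
proof -
  have "snd \<in> measurable (edge_space N) (count_space {..<N})"
    unfolding edge_space_def
    using measurable_snd[of "node_pos N" "uniform_count_measure {..<N}"]
    by (simp cong: measurable_cong_sets add: sets_uniform_count_measure_count_space)
  then have "(\<lambda>w. f (snd w) (fst w)) \<in> borel_measurable (edge_space N)"
  proof (rule measurable_compose_countable'[rotated])
    fix I assume "I \<in> {..<N}"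
    then show "(\<lambda>w. f I (fst w)) \<in> borel_measurable (edge_space N)"
      using assms unfolding edge_space_def by (intro measurable_compose[OF measurable_fst]) auto
  qed simp
  then show ?thesis by (simp add: case_prod_beta')
qed

lemma borel_measurable_edge_lbar[measurable]: "(\<lambda>(x, I). lbar N I x) \<in> borel_measurable (edge_space N)"
  by (rule borel_measurable_edge_space_split) simp

lemma borel_measurable_edge_dl[measurable]: "(\<lambda>(x, I). dl N I x) \<in> borel_measurable (edge_space N)"
  by (rule borel_measurable_edge_space_split) simp

lemma integral_edge_space:
  fixes H :: "(nat \<Rightarrow> real) \<times> nat \<Rightarrow> real"
  assumes "0 < N" "H \<in> borel_measurable (edge_space N)" "\<And>w. \<bar>H w\<bar> \<le> C"
  shows "integral\<^sup>L (edge_space N) H = (\<Sum>I<N. \<integral>x. H (x, I) \<partial>node_pos N) / N"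
proof -
  interpret prob_space "edge_space N" using assms(1) by (rule prob_space_edge_space)
  interpret pair_sigma_finite "node_pos N" "uniform_count_measure {..<N}"
    using assms(1)
    by (intro pair_sigma_finite.intro prob_space_imp_sigma_finite node_pos.prob_space_axioms
        prob_space_uniform_count_measure) auto
  have "integrable (edge_space N) H"
    using assms(2,3) by (intro integrable_const_bound[where B=C]) auto
  then have "integral\<^sup>L (edge_space N) H = (\<integral>I. (\<integral>x. H (x, I) \<partial>node_pos N) \<partial>uniform_count_measure {..<N})"
    using integral_snd[of "\<lambda>x I. H (x, I)"] unfolding edge_space_def by simp
  then show ?thesis by (simp add: integral_uniform_count_measure)
qed

lemma integral_edge_space_cong:
  fixes F G :: "(nat \<Rightarrow> real) \<times> nat \<Rightarrow> real"
  assumes "0 < N" "F \<in> borel_measurable (edge_space N)" "G \<in> borel_measurable (edge_space N)"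
    and "\<And>w. \<bar>F w\<bar> \<le> C" "\<And>w. \<bar>G w\<bar> \<le> D"
    and "\<And>I. I < N \<Longrightarrow> (\<integral>x. F (x, I) \<partial>node_pos N) = (\<integral>x. G (x, I) \<partial>node_pos N)"
  shows "integral\<^sup>L (edge_space N) F = integral\<^sup>L (edge_space N) G"
  using assms by (simp add: integral_edge_space[where C=C] integral_edge_space[where C=D])

lemma AE_cond_var_dl_edge_space:
  assumes "4 \<le> N"
  shows "AE w in edge_space N.
    cond_var (edge_space N) (vimage_algebra (space (edge_space N)) (\<lambda>(x, I). lbar N I x) borel)
      (\<lambda>(x, I). dl N I x) w = (real N - 1) / (12 * (real N)\<^sup>2)"
proof (rule AE_cond_var_eq_const[where m="\<lambda>t. (1 / N - 1) * t" and C=1])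
  let ?A = "\<lambda>(x, I). lbar N I x" and ?X = "\<lambda>(x, I). dl N I x"
  let ?v = "(real N - 1) / (12 * (real N)\<^sup>2)"
  have "0 < N" using assms by simp
  have "\<bar>(1 / N - 1) * lbar N I x\<bar> \<le> 1" for I x
    using abs_scaled_lbar_le[OF \<open>0 < N\<close>, of I x] by linarith
  note bounds = abs_dl_le[OF \<open>0 < N\<close>] this
  show "prob_space (edge_space N)" using \<open>0 < N\<close> by (rule prob_space_edge_space)
  show "\<bar>?X w\<bar> \<le> 1" "\<bar>(1 / N - 1) * ?A w\<bar> \<le> 1" for w
    using bounds[of "snd w" "fst w"] by (auto simp: case_prod_beta)
  fix B :: "real set" assume [measurable]: "B \<in> sets borel"
  show "(\<integral>w. indicator B (?A w) * ?X w \<partial>edge_space N)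
      = (\<integral>w. indicator B (?A w) * ((1 / N - 1) * ?A w) \<partial>edge_space N)"
    by (rule integral_edge_space_cong[OF \<open>0 < N\<close>, where C=1 and D=1])
      (use assms bounds integral_indicator_lbar_times_dl in \<open>auto simp: indicator_def\<close>)
  have "\<bar>dl N I x - (1 / N - 1) * lbar N I x\<bar> \<le> \<bar>2\<bar>" for I x
    using bounds[of I x] by linarith
  then have residual_bounded: "(dl N I x - (1 / N - 1) * lbar N I x)\<^sup>2 \<le> 2\<^sup>2" for I x
    unfolding abs_le_square_iff .
  have "(\<integral>w. indicator B (?A w) * (?X w - (1 / N - 1) * ?A w)\<^sup>2 \<partial>edge_space N)
      = (\<integral>w. ?v * indicator B (?A w) \<partial>edge_space N)"
    by (rule integral_edge_space_cong[OF \<open>0 < N\<close>, where C=4 and D="\<bar>?v\<bar>"])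
      (use assms residual_bounded integral_indicator_lbar_times_dl_residual in \<open>auto simp: indicator_def\<close>)
  then show "(\<integral>w. indicator B (?A w) * (?X w - (1 / N - 1) * ?A w)\<^sup>2 \<partial>edge_space N)
      = ?v * (\<integral>w. indicator B (?A w) \<partial>edge_space N)"
    by simp
qed simp_all

theorem mainTheorem5:
  fixes N :: nat
  assumes "N \<ge> 4"
  shows "(\<forall>i<N. prob_space.variance (node_pos N) (lbar N i) = 1/12)
    \<and> (\<forall>i<N. AE x in node_pos N.
          cond_var (node_pos N) (vimage_algebra (space (node_pos N)) (lbar N i) borel) (dl N i) x
            = (real N - 1) / (real N)\<^sup>2 * (1/12))
    \<and> (AE w in edge_space N.
          cond_var (edge_space N)
             (vimage_algebra (space (edge_space N)) (\<lambda>(x, I). lbar N I x) borel)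
             (\<lambda>(x, I). dl N I x) w
            = (real N - 1) / (12 * (real N)\<^sup>2))
    \<and> (\<integral>w. cond_var (edge_space N)
             (vimage_algebra (space (edge_space N)) (\<lambda>(x, I). lbar N I x) borel)
             (\<lambda>(x, I). dl N I x) w \<partial>edge_space N)
            = (real N - 1) / (12 * (real N)\<^sup>2)"
proof -
  interpret edge_space: prob_space "edge_space N"
    using assms by (intro prob_space_edge_space) simp
  have "(\<integral>w. cond_var (edge_space N)
             (vimage_algebra (space (edge_space N)) (\<lambda>(x, I). lbar N I x) borel)
             (\<lambda>(x, I). dl N I x) w \<partial>edge_space N)
      = (\<integral>w. (real N - 1) / (12 * (real N)\<^sup>2) \<partial>edge_space N)"
    using AE_cond_var_dl_edge_space[OF assms] by (intro integral_cong_AE) (simp_all add: cond_var_def)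
  then show ?thesis
    using assms variance_lbar AE_cond_var_dl AE_cond_var_dl_edge_space by (simp add: edge_space.prob_space)
qed

end
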